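(* Let $k\ge2$, let $G$ be a countably infinite one-way $k$-locally finite graph, and let $H$ be a countable graph with a partition $\{U_1,\dots,U_k\}$ of $V(H)$ into infinite sets such that for every $i\in[k]$ and every finite $W\subseteq U_1\cup\dots\cup U_{i-1}$, the set of vertices in $U_i$ adjacent to every vertex of $W$ is infinite. Then there is an embedding $f$ of $G$ into $H$ (an injective map $V(G)\to V(H)$ sending edges to edges) with $U_1\subseteq f(V(G))$.
   Context: A graph $G$ is one-way $k$-locally finite ($k\ge2$) if there is a partition of $V(G)$ into $k$ independent sets $V_1,\dots,V_k$ with $|V_1|\geq\dots\geq|V_k|$ such that for all $1\le i<j\le k$ and all $v\in V_j$, $v$ has only finitely many neighbors in $V_i$. *)

theory Defs
  imports Main "HOL-Library.Countable_Set"
begin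

definition simple_graph :: "'a set \<Rightarrow> ('a \<Rightarrow> 'a \<Rightarrow> bool) \<Rightarrow> bool" where
  "simple_graph V E \<longleftrightarrow>
     (\<forall>u v. E u v \<longrightarrow> E v u) \<and> (\<forall>v. \<not> E v v) \<and> (\<forall>u v. E u v \<longrightarrow> u \<in> V \<and> v \<in> V)"

definition card_leq :: "'b set \<Rightarrow> 'c set \<Rightarrow> bool" where
  "card_leq B A \<longleftrightarrow> (\<exists>f. inj_on f B \<and> f ` B \<subseteq> A)"

definition is_partition :: "'a set \<Rightarrow> nat \<Rightarrow> (nat \<Rightarrow> 'a set) \<Rightarrow> bool" where
  "is_partition V k P \<longleftrightarrow>
     (\<Union>i\<in>{1..k}. P i) = V \<and> (\<forall>i\<in>{1..k}. \<forall>j\<in>{1..k}. i \<noteq> j \<longrightarrow> P i \<inter> P j = {})"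

definition independent_set :: "('a \<Rightarrow> 'a \<Rightarrow> bool) \<Rightarrow> 'a set \<Rightarrow> bool" where
  "independent_set E S \<longleftrightarrow> (\<forall>u\<in>S. \<forall>v\<in>S. \<not> E u v)"

definition one_way_locally_finite :: "nat \<Rightarrow> 'a set \<Rightarrow> ('a \<Rightarrow> 'a \<Rightarrow> bool) \<Rightarrow> bool" where
  "one_way_locally_finite k V E \<longleftrightarrow> k \<ge> 2 \<and>
     (\<exists>P. is_partition V k P \<and> (\<forall>i\<in>{1..k}. independent_set E (P i)) \<and>
          (\<forall>i j. 1 \<le> i \<and> i \<le> j \<and> j \<le> k \<longrightarrow> card_leq (P j) (P i)) \<and>
          (\<forall>i j. 1 \<le> i \<and> i < j \<and> j \<le> k \<longrightarrow>
              (\<forall>v\<in>P j. finite {u\<in>P i. E v u})))"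

definition graph_embedding ::
  "'a set \<Rightarrow> ('a \<Rightarrow> 'a \<Rightarrow> bool) \<Rightarrow> 'b set \<Rightarrow> ('b \<Rightarrow> 'b \<Rightarrow> bool) \<Rightarrow> ('a \<Rightarrow> 'b) \<Rightarrow> bool" where
  "graph_embedding VG EG VH EH f \<longleftrightarrow>
     inj_on f VG \<and> f ` VG \<subseteq> VH \<and> (\<forall>u\<in>VG. \<forall>v\<in>VG. EG u v \<longrightarrow> EH (f u) (f v))"

end

theory Submission
  imports Defs
begin

text \<open>The embedding is the union of a chain of finite partial embeddings, built by a
  back-and-forth argument. A partial embedding is kept closed under lower neighbours
  (neighbours in parts of smaller index), of which every vertex has finitely many. To add a
  vertex of part j, first add its lower neighbours recursively; by closedness these are its
  only neighbours already embedded, and the hypothesis on H yields an unused vertex of the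
  j-th part of H adjacent to all their images. To cover a vertex of the first part of H,
  use an unembedded vertex of the first part of G, which is infinite because it is the
  largest part; such a vertex has no embedded neighbours at all.\<close>

definition extends :: "'a set \<Rightarrow> ('a \<Rightarrow> 'b) \<Rightarrow> 'a set \<Rightarrow> ('a \<Rightarrow> 'b) \<Rightarrow> bool" where
  "extends D g D' g' \<longleftrightarrow> D \<subseteq> D' \<and> (\<forall>v\<in>D. g' v = g v)"

lemma extends_refl: "extends D g D g"
  by (simp add: extends_def)

lemma extends_trans: "extends D g D1 g1 \<Longrightarrow> extends D1 g1 D2 g2 \<Longrightarrow> extends D g D2 g2"
  by (auto simp: extends_def)

lemma extends_chain_mono:
  assumes chain: "\<And>n. extends (D n) (g n) (D (Suc n)) (g (Suc n))" and "m \<le> n"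
  shows "extends (D m) (g m) (D n) (g n)"
  using \<open>m \<le> n\<close>
proof (induction n rule: dec_induct)
  case base
  show ?case by (rule extends_refl)
next
  case (step i)
  show ?case by (rule extends_trans[OF step.IH chain])
qed

lemma extends_chain_limit:
  assumes chain: "\<And>n. extends (D n) (g n) (D (Suc n)) (g (Suc n))"
  obtains f where "\<And>n v. v \<in> D n \<Longrightarrow> f v = g n v"
proof -
  define f where "f v = g (LEAST n. v \<in> D n) v" for v
  have "f v = g n v" if v: "v \<in> D n" for n v
  proof -
    let ?m = "LEAST n. v \<in> D n"
    have "?m \<le> n" "v \<in> D ?m"
      using v by (rule Least_le, rule LeastI)
    then have "extends (D ?m) (g ?m) (D n) (g n)" "v \<in> D ?m"
      using extends_chain_mono[of D g, OF chain] by blast+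
    then show ?thesis
      unfolding f_def extends_def by simp
  qed
  then show ?thesis by (rule that)
qed

lemma infinite_largest_part:
  assumes part: "is_partition V k P" and "infinite V"
    and le: "\<forall>j\<in>{1..k}. card_leq (P j) (P 1)"
  shows "infinite (P 1)"
proof -
  have "infinite (\<Union>i\<in>{1..k}. P i)"
    using part \<open>infinite V\<close> unfolding is_partition_def by simp
  then obtain j where j: "j \<in> {1..k}" "infinite (P j)"
    by (meson finite_UN_I finite_atLeastAtMost)
  then obtain h where "inj_on h (P j)" "h ` P j \<subseteq> P 1"
    using le unfolding card_leq_def by blast
  then show ?thesis
    using j(2) finite_imageD finite_subset by metis
qed

locale one_way_embedding =
  fixes k :: nat and VG :: "'a set" and EG :: "'a \<Rightarrow> 'a \<Rightarrow> bool"
    and VH :: "'b set" and EH :: "'b \<Rightarrow> 'b \<Rightarrow> bool"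
    and U :: "nat \<Rightarrow> 'b set" and P :: "nat \<Rightarrow> 'a set"
  assumes countable_VG: "countable VG" and countable_U1: "countable (U 1)"
    and k_pos: "1 \<le> k"
    and simple_G: "simple_graph VG EG" and simple_H: "simple_graph VH EH"
    and partition_G: "is_partition VG k P"
    and independent_parts: "\<forall>i\<in>{1..k}. independent_set EG (P i)"
    and finite_lower_neighbours:
      "\<forall>i j. 1 \<le> i \<and> i < j \<and> j \<le> k \<longrightarrow> (\<forall>v\<in>P j. finite {u\<in>P i. EG v u})"
    and infinite_P1: "infinite (P 1)"
    and partition_H: "is_partition VH k U"
    and extension_property: "\<forall>i\<in>{1..k}. \<forall>W. finite W \<and> W \<subseteq> (\<Union>j\<in>{1..<i}. U j) \<longrightarrow>
            infinite {u \<in> U i. \<forall>w\<in>W. EH u w}"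
begin

lemma part_unique: "\<lbrakk>v \<in> P i; v \<in> P j; i \<in> {1..k}; j \<in> {1..k}\<rbrakk> \<Longrightarrow> i = j"
  using partition_G unfolding is_partition_def by blast

lemma part_exists: "v \<in> VG \<Longrightarrow> \<exists>i\<in>{1..k}. v \<in> P i"
  using partition_G unfolding is_partition_def by blast

lemma P_subset: "i \<in> {1..k} \<Longrightarrow> P i \<subseteq> VG"
  using partition_G unfolding is_partition_def by blast

lemma U_subset: "i \<in> {1..k} \<Longrightarrow> U i \<subseteq> VH"
  using partition_H unfolding is_partition_def by blast

lemma EG_sym: "EG u v \<Longrightarrow> EG v u"
  using simple_G unfolding simple_graph_def by blast

lemma EG_irrefl: "\<not> EG v v"
  using simple_G unfolding simple_graph_def by blast

lemma EH_sym: "EH u v \<Longrightarrow> EH v u"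
  using simple_H unfolding simple_graph_def by blast

lemma infinite_common_neighbours:
  assumes "i \<in> {1..k}" "finite W" "W \<subseteq> (\<Union>j\<in>{1..<i}. U j)"
  shows "infinite {u \<in> U i. \<forall>w\<in>W. EH u w}"
  using extension_property assms by blast

definition lower_neighbours :: "nat \<Rightarrow> 'a \<Rightarrow> 'a set" where
  "lower_neighbours j v = (\<Union>i\<in>{1..<j}. {u\<in>P i. EG v u})"

lemma finite_lower_neighbours_of: "\<lbrakk>j \<in> {1..k}; v \<in> P j\<rbrakk> \<Longrightarrow> finite (lower_neighbours j v)"
  unfolding lower_neighbours_def using finite_lower_neighbours by auto

definition admissible :: "'a set \<Rightarrow> ('a \<Rightarrow> 'b) \<Rightarrow> bool" where
  "admissible D g \<longleftrightarrow> finite D \<and> D \<subseteq> VG \<and> inj_on g D \<and>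
     (\<forall>i\<in>{1..k}. \<forall>v\<in>D \<inter> P i. g v \<in> U i \<and> lower_neighbours i v \<subseteq> D) \<and>
     (\<forall>u\<in>D. \<forall>v\<in>D. EG u v \<longrightarrow> EH (g u) (g v))"

lemma
  assumes "admissible D g"
  shows admissible_finite: "finite D"
    and admissible_subset: "D \<subseteq> VG"
    and admissible_inj: "inj_on g D"
    and admissible_part: "\<lbrakk>i \<in> {1..k}; v \<in> D; v \<in> P i\<rbrakk> \<Longrightarrow> g v \<in> U i"
    and admissible_lower_closed:
      "\<lbrakk>i \<in> {1..k}; v \<in> D; v \<in> P i\<rbrakk> \<Longrightarrow> lower_neighbours i v \<subseteq> D"
    and admissible_edge: "\<lbrakk>u \<in> D; v \<in> D; EG u v\<rbrakk> \<Longrightarrow> EH (g u) (g v)"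
  using assms unfolding admissible_def by blast+

lemma admissible_empty: "admissible {} g"
  by (simp add: admissible_def)

lemma admissible_neighbour_in_lower_part:
  assumes adm: "admissible D g" and j: "j \<in> {1..k}" and v: "v \<in> P j" "v \<notin> D"
    and y: "y \<in> D" "y \<in> P i" "i \<in> {1..k}" and edge: "EG v y"
  shows "i < j"
proof -
  have "i \<noteq> j"
    using independent_parts j v y edge unfolding independent_set_def by blast
  moreover have "\<not> j < i"
  proof
    assume "j < i"
    then have "v \<in> lower_neighbours i y"
      unfolding lower_neighbours_def using j v edge EG_sym by auto
    then show False
      using admissible_lower_closed[OF adm y(3,1,2)] v(2) by blast
  qed
  ultimately show ?thesis by simp
qed

lemma admissible_insert:
  assumes adm: "admissible D g" and j: "j \<in> {1..k}" and v: "v \<in> P j" "v \<notin> D"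
    and lower: "lower_neighbours j v \<subseteq> D"
    and h: "h \<in> U j" "h \<notin> g ` D"
    and adj: "\<forall>y\<in>D. EG v y \<longrightarrow> EH h (g y)"
  shows "admissible (insert v D) (g(v := h))" "extends D g (insert v D) (g(v := h))"
proof -
  have part_of_v: "i = j" if "i \<in> {1..k}" "v \<in> P i" for i
    using part_unique that j v by blast
  show "admissible (insert v D) (g(v := h))"
    unfolding admissible_def
  proof (intro conjI)
    show "finite (insert v D)"
      using admissible_finite[OF adm] by simp
    show "insert v D \<subseteq> VG"
      using admissible_subset[OF adm] P_subset j v by blast
    show "inj_on (g(v := h)) (insert v D)"
      using admissible_inj[OF adm] h(2) v(2) by (auto simp: inj_on_def)
    show "\<forall>i\<in>{1..k}. \<forall>x\<in>insert v D \<inter> P i.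
        (g(v := h)) x \<in> U i \<and> lower_neighbours i x \<subseteq> insert v D"
    proof (intro ballI conjI)
      fix i x assume i: "i \<in> {1..k}" and x: "x \<in> insert v D \<inter> P i"
      show "(g(v := h)) x \<in> U i"
        using admissible_part[OF adm i] h(1) part_of_v[OF i] x by auto
      show "lower_neighbours i x \<subseteq> insert v D"
      proof (cases "x = v")
        case True
        then show ?thesis using lower part_of_v[OF i] x by auto
      next
        case False
        then show ?thesis using admissible_lower_closed[OF adm i] x by blast
      qed
    qed
    show "\<forall>x\<in>insert v D. \<forall>y\<in>insert v D. EG x y \<longrightarrow> EH ((g(v := h)) x) ((g(v := h)) y)"
    proof (intro ballI impI)
      fix x y assume xy: "x \<in> insert v D" "y \<in> insert v D" "EG x y"
      consider "x = v" "y \<in> D" | "y = v" "x \<in> D" | "x \<in> D" "y \<in> D"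
        using xy EG_irrefl by blast
      then show "EH ((g(v := h)) x) ((g(v := h)) y)"
      proof cases
        case 1
        then show ?thesis using adj xy(3) v(2) by auto
      next
        case 2
        then have "EH h (g x)" using adj xy(3) EG_sym by blast
        then show ?thesis using 2 v(2) EH_sym by auto
      next
        case 3
        then show ?thesis using admissible_edge[OF adm] xy(3) v(2) by auto
      qed
    qed
  qed
  show "extends D g (insert v D) (g(v := h))"
    using v(2) unfolding extends_def by auto
qed

lemma extends_to_finite_set:
  assumes single: "\<And>D g v. admissible D g \<Longrightarrow> v \<in> S \<Longrightarrow>
      \<exists>D' g'. admissible D' g' \<and> extends D g D' g' \<and> v \<in> D'"
    and F: "finite F" "F \<subseteq> S" and adm: "admissible D g"
  shows "\<exists>D' g'. admissible D' g' \<and> extends D g D' g' \<and> F \<subseteq> D'"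
  using F adm
proof (induction F arbitrary: D g rule: finite_induct)
  case empty
  then show ?case using extends_refl by blast
next
  case (insert x F)
  have "F \<subseteq> S" "x \<in> S" using insert.prems(1) by auto
  obtain D1 g1 where 1: "admissible D1 g1" "extends D g D1 g1" "F \<subseteq> D1"
    using insert.IH[OF \<open>F \<subseteq> S\<close> insert.prems(2)] by blast
  obtain D2 g2 where 2: "admissible D2 g2" "extends D1 g1 D2 g2" "x \<in> D2"
    using single[OF 1(1) \<open>x \<in> S\<close>] by blast
  have "insert x F \<subseteq> D2" using 1(3) 2(2,3) unfolding extends_def by blast
  then show ?case using 2(1) extends_trans[OF 1(2) 2(2)] by blast
qed

lemma extends_to_vertex_above_lower_neighbours:
  assumes adm: "admissible D g" and j: "j \<in> {1..k}" "v \<in> P j"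
    and lower: "lower_neighbours j v \<subseteq> D"
  shows "\<exists>D' g'. admissible D' g' \<and> extends D g D' g' \<and> v \<in> D'"
proof (cases "v \<in> D")
  case True
  then show ?thesis using adm extends_refl by blast
next
  case False
  let ?W = "g ` lower_neighbours j v"
  have "?W \<subseteq> (\<Union>i\<in>{1..<j}. U i)"
  proof
    fix w assume "w \<in> ?W"
    then obtain i u where i: "i \<in> {1..<j}" and u: "u \<in> P i" "u \<in> D" and w: "w = g u"
      using lower unfolding lower_neighbours_def by blast
    have "g u \<in> U i"
      using admissible_part[OF adm] i u j(1) by auto
    then show "w \<in> (\<Union>i\<in>{1..<j}. U i)" using i w by blast
  qed
  moreover have "finite ?W"
    using finite_lower_neighbours_of[OF j] by simp
  ultimately have "infinite {u \<in> U j. \<forall>w\<in>?W. EH u w}"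
    using infinite_common_neighbours j(1) by blast
  moreover have "finite (g ` D)"
    using admissible_finite[OF adm] by simp
  ultimately have "infinite ({u \<in> U j. \<forall>w\<in>?W. EH u w} - g ` D)"
    by (rule Diff_infinite_finite[rotated])
  then obtain h where "h \<in> {u \<in> U j. \<forall>w\<in>?W. EH u w} - g ` D"
    using infinite_imp_nonempty by blast
  then have h: "h \<in> U j" "\<forall>w\<in>?W. EH h w" "h \<notin> g ` D"
    by blast+
  have "\<forall>y\<in>D. EG v y \<longrightarrow> EH h (g y)"
  proof (intro ballI impI)
    fix y assume y: "y \<in> D" and vy: "EG v y"
    obtain i where i: "i \<in> {1..k}" "y \<in> P i"
      using part_exists admissible_subset[OF adm] y by blast
    then have "i < j"
      using admissible_neighbour_in_lower_part[OF adm j False y] vy by blast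
    then have "y \<in> lower_neighbours j v"
      unfolding lower_neighbours_def using i vy by auto
    then show "EH h (g y)" using h(2) by blast
  qed
  then have "admissible (insert v D) (g(v := h))" "extends D g (insert v D) (g(v := h))"
    using admissible_insert[OF adm j False lower h(1,3)] by blast+
  then show ?thesis by blast
qed

lemma extends_to_vertex_of_part:
  assumes "j \<in> {1..k}" "admissible D g" "v \<in> P j"
  shows "\<exists>D' g'. admissible D' g' \<and> extends D g D' g' \<and> v \<in> D'"
  using assms
proof (induction j arbitrary: D g v rule: less_induct)
  case (less j)
  have single: "\<exists>D' g'. admissible D' g' \<and> extends D0 g0 D' g' \<and> u \<in> D'"
    if adm0: "admissible D0 g0" and u: "u \<in> (\<Union>i\<in>{1..<j}. P i)" for D0 g0 u
  proof -
    obtain i where i: "i \<in> {1..<j}" "u \<in> P i" using u by blast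
    then have "i \<in> {1..k}" "i < j" using less.prems(1) by auto
    then show ?thesis using less.IH adm0 i(2) by blast
  qed
  have "lower_neighbours j v \<subseteq> (\<Union>i\<in>{1..<j}. P i)"
    unfolding lower_neighbours_def by blast
  then obtain D1 g1 where 1: "admissible D1 g1" "extends D g D1 g1"
      "lower_neighbours j v \<subseteq> D1"
    using extends_to_finite_set[OF single finite_lower_neighbours_of[OF less.prems(1,3)] _
        less.prems(2)]
    by blast
  then show ?case
    using extends_to_vertex_above_lower_neighbours[OF 1(1) less.prems(1,3) 1(3)]
      extends_trans[OF 1(2)] by blast
qed

lemma extends_to_vertex:
  assumes "admissible D g" "v \<in> VG"
  shows "\<exists>D' g'. admissible D' g' \<and> extends D g D' g' \<and> v \<in> D'"
proof -
  obtain j where "j \<in> {1..k}" "v \<in> P j"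
    using part_exists assms(2) by blast
  then show ?thesis
    using extends_to_vertex_of_part assms(1) by blast
qed

lemma extends_to_image:
  assumes adm: "admissible D g" and h: "h \<in> U 1"
  shows "\<exists>D' g'. admissible D' g' \<and> extends D g D' g' \<and> h \<in> g' ` D'"
proof (cases "h \<in> g ` D")
  case True
  then show ?thesis using adm extends_refl by blast
next
  case False
  have "infinite (P 1 - D)"
    using admissible_finite[OF adm] infinite_P1 by (rule Diff_infinite_finite)
  then obtain v where v: "v \<in> P 1" "v \<notin> D"
    using infinite_imp_nonempty by blast
  have one: "1 \<in> {1..k}" using k_pos by simp
  have "\<not> EG v y" if y: "y \<in> D" for y
  proof
    assume "EG v y"
    moreover obtain i where "i \<in> {1..k}" "y \<in> P i"
      using part_exists admissible_subset[OF adm] y by blast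
    ultimately have "i < 1"
      using admissible_neighbour_in_lower_part[OF adm one v y] by blast
    then show False using \<open>i \<in> {1..k}\<close> by simp
  qed
  moreover have "lower_neighbours 1 v \<subseteq> D"
    by (simp add: lower_neighbours_def)
  ultimately have "admissible (insert v D) (g(v := h))" "extends D g (insert v D) (g(v := h))"
    using admissible_insert[OF adm one v _ h False] by auto
  moreover have "h \<in> (g(v := h)) ` insert v D" by simp
  ultimately show ?thesis by blast
qed

lemma admissible_chain:
  obtains D :: "nat \<Rightarrow> 'a set" and g :: "nat \<Rightarrow> 'a \<Rightarrow> 'b"
  where "\<And>n. admissible (D n) (g n)" "\<And>n. extends (D n) (g n) (D (Suc n)) (g (Suc n))"
    and "VG \<subseteq> (\<Union>n. D n)" and "U 1 \<subseteq> (\<Union>n. g n ` D n)"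
proof -
  have VG_nonempty: "VG \<noteq> {}"
    using infinite_P1 P_subset[of 1] k_pos by auto
  have U1_nonempty: "U 1 \<noteq> {}"
    using infinite_common_neighbours[of 1 "{}"] k_pos by auto
  define Step where "Step n st st' \<longleftrightarrow> extends (fst st) (snd st) (fst st') (snd st') \<and>
      from_nat_into VG n \<in> fst st' \<and> from_nat_into (U 1) n \<in> snd st' ` fst st'"
    for n :: nat and st st' :: "'a set \<times> ('a \<Rightarrow> 'b)"
  have "\<exists>st'. admissible (fst st') (snd st') \<and> Step n st st'"
    if adm_st: "admissible (fst st) (snd st)" for n st
  proof -
    obtain D1 g1 where 1: "admissible D1 g1" "extends (fst st) (snd st) D1 g1"
        "from_nat_into VG n \<in> D1"
      using extends_to_vertex[OF adm_st from_nat_into[OF VG_nonempty]] by blast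
    obtain D2 g2 where 2: "admissible D2 g2" "extends D1 g1 D2 g2"
        "from_nat_into (U 1) n \<in> g2 ` D2"
      using extends_to_image[OF 1(1) from_nat_into[OF U1_nonempty]] by blast
    have "from_nat_into VG n \<in> D2"
      using 1(3) 2(2) unfolding extends_def by blast
    then have "admissible (fst (D2, g2)) (snd (D2, g2)) \<and> Step n st (D2, g2)"
      using 2(1,3) extends_trans[OF 1(2) 2(2)] unfolding Step_def by simp
    then show ?thesis by blast
  qed
  then obtain st where st: "\<And>n. admissible (fst (st n)) (snd (st n))"
      "\<And>n. Step n (st n) (st (Suc n))"
    using dependent_nat_choice[of "\<lambda>_ st. admissible (fst st) (snd st)" Step]
      admissible_empty by fastforce
  show ?thesis
  proof (rule that[of "\<lambda>n. fst (st n)" "\<lambda>n. snd (st n)"])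
    show "admissible (fst (st n)) (snd (st n))" for n
      by (rule st(1))
    show "extends (fst (st n)) (snd (st n)) (fst (st (Suc n))) (snd (st (Suc n)))" for n
      using st(2) unfolding Step_def by blast
    show "VG \<subseteq> (\<Union>n. fst (st n))"
    proof
      fix v assume "v \<in> VG"
      then obtain n where "v = from_nat_into VG n"
        using from_nat_into_surj[OF countable_VG] by metis
      then show "v \<in> (\<Union>n. fst (st n))"
        using st(2)[of n] unfolding Step_def by blast
    qed
    show "U 1 \<subseteq> (\<Union>n. snd (st n) ` fst (st n))"
    proof
      fix h assume "h \<in> U 1"
      then obtain n where "h = from_nat_into (U 1) n"
        using from_nat_into_surj[OF countable_U1] by metis
      then show "h \<in> (\<Union>n. snd (st n) ` fst (st n))"
        using st(2)[of n] unfolding Step_def by blast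
    qed
  qed
qed

lemma embedding_from_chain:
  assumes adm: "\<And>n. admissible (D n) (g n)"
    and chain: "\<And>n. extends (D n) (g n) (D (Suc n)) (g (Suc n))"
    and VG: "VG \<subseteq> (\<Union>n. D n)" and U1: "U 1 \<subseteq> (\<Union>n. g n ` D n)"
  shows "\<exists>f. graph_embedding VG EG VH EH f \<and> U 1 \<subseteq> f ` VG"
proof -
  obtain f where f: "\<And>n v. v \<in> D n \<Longrightarrow> f v = g n v"
    using extends_chain_limit[of D g, OF chain] by blast
  have common: "\<exists>n. u \<in> D n \<and> v \<in> D n" if uv: "u \<in> VG" "v \<in> VG" for u v
  proof -
    obtain a b where "u \<in> D a" "v \<in> D b"
      using VG uv by blast
    moreover have "D a \<subseteq> D (max a b)" "D b \<subseteq> D (max a b)"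
      using extends_chain_mono[of D g, OF chain] unfolding extends_def by simp_all
    ultimately show ?thesis by blast
  qed
  have "inj_on f VG"
  proof (rule inj_onI)
    fix u v assume "u \<in> VG" "v \<in> VG" "f u = f v"
    moreover obtain n where "u \<in> D n" "v \<in> D n"
      using common \<open>u \<in> VG\<close> \<open>v \<in> VG\<close> by blast
    ultimately show "u = v"
      using admissible_inj[OF adm] f by (metis inj_onD)
  qed
  moreover have "f ` VG \<subseteq> VH"
  proof
    fix w assume "w \<in> f ` VG"
    then obtain v n where "v \<in> VG" "v \<in> D n" "w = f v"
      using VG by blast
    moreover obtain i where "i \<in> {1..k}" "v \<in> P i"
      using part_exists \<open>v \<in> VG\<close> by blast
    ultimately have "w \<in> U i"
      using admissible_part[OF adm] f by simp
    then show "w \<in> VH"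
      using U_subset \<open>i \<in> {1..k}\<close> by blast
  qed
  moreover have "EH (f u) (f v)" if "u \<in> VG" "v \<in> VG" "EG u v" for u v
    using common[OF that(1,2)] admissible_edge[OF adm] that(3) f by metis
  moreover have "U 1 \<subseteq> f ` VG"
  proof
    fix h assume "h \<in> U 1"
    then obtain n v where "v \<in> D n" "h = g n v"
      using U1 by blast
    then have "v \<in> VG" "h = f v"
      using admissible_subset[OF adm, of n] f by auto
    then show "h \<in> f ` VG" by blast
  qed
  ultimately show ?thesis
    unfolding graph_embedding_def by blast
qed

lemma embedding_exists: "\<exists>f. graph_embedding VG EG VH EH f \<and> U 1 \<subseteq> f ` VG"
proof (rule admissible_chain)
  fix D g
  assume "\<And>n. admissible (D n) (g n)" "\<And>n. extends (D n) (g n) (D (Suc n)) (g (Suc n))"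
    "VG \<subseteq> (\<Union>n. D n)" "U 1 \<subseteq> (\<Union>n. g n ` D n)"
  then show ?thesis by (rule embedding_from_chain)
qed

end

theorem mainTheorem19:
  fixes k :: nat
    and VG :: "'a set" and EG :: "'a \<Rightarrow> 'a \<Rightarrow> bool"
    and VH :: "'b set" and EH :: "'b \<Rightarrow> 'b \<Rightarrow> bool"
    and U :: "nat \<Rightarrow> 'b set"
  assumes "k \<ge> 2"
    and "simple_graph VG EG" and "countable VG" and "infinite VG"
    and "one_way_locally_finite k VG EG"
    and "simple_graph VH EH" and "countable VH"
    and "is_partition VH k U"
    and "\<forall>i\<in>{1..k}. infinite (U i)"
    and "\<forall>i\<in>{1..k}. \<forall>W. finite W \<and> W \<subseteq> (\<Union>j\<in>{1..<i}. U j) \<longrightarrow>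
            infinite {u \<in> U i. \<forall>w\<in>W. EH u w}"
  shows "\<exists>f. graph_embedding VG EG VH EH f \<and> U 1 \<subseteq> f ` VG"
proof -
  obtain P where P: "is_partition VG k P" "\<forall>i\<in>{1..k}. independent_set EG (P i)"
    "\<forall>i j. 1 \<le> i \<and> i \<le> j \<and> j \<le> k \<longrightarrow> card_leq (P j) (P i)"
    "\<forall>i j. 1 \<le> i \<and> i < j \<and> j \<le> k \<longrightarrow> (\<forall>v\<in>P j. finite {u\<in>P i. EG v u})"
    using assms(5) unfolding one_way_locally_finite_def by blast
  have "infinite (P 1)"
    using infinite_largest_part[OF P(1) assms(4)] P(3) by auto
  moreover have "U 1 \<subseteq> VH"
    using assms(1,8) unfolding is_partition_def by auto
  then have "countable (U 1)"
    using assms(7) countable_subset by blast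
  ultimately interpret one_way_embedding k VG EG VH EH U P
    using assms(1-3,6,8,10) P(1,2,4) by unfold_locales auto
  show ?thesis by (rule embedding_exists)
qed

end
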